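(* Let $\mathcal{A}$ be a C*-algebra, let $E$ be a Hilbert $\mathcal{A}$-module satisfying property $[\mathbb{H}]$ and let $C\in\mathcal{K}(E)$. Then for every nonzero $\lambda\in\mathbb{C}$ the range $\mathrm{Ran}(\lambda I-C)$ is closed and is an orthogonal summand of $E$. In particular, $E=\mathrm{Ker}(I-C^* )\oplus \mathrm{Ran}(I-C)$.
   Context: A (right) Hilbert $\mathcal{A}$-module $E$ is a right $\mathcal{A}$-module with an $\mathcal{A}$-valued inner product $\langle\cdot,\cdot\rangle$ (linear in the second variable, $\langle x,ya\rangle=\langle x,y\rangle a$, $\langle y,x\rangle=\langle x,y\rangle^*$, $\langle x,x\rangle\ge 0$ with equality iff $x=0$), complete in the norm $\|x\|=\|\langle x,x\rangle\|^{1/2}$. $\mathcal{L}(E)$ denotes the C*-algebra of adjointable operators on $E$; for $x,y\in E$, $\theta_{x,y}(z)=x\langle y,z\rangle$; $\mathcal{K}(E)$ (the compact operators) is the norm closure in $\mathcal{L}(E)$ of the linear span of $\{\theta_{x,y}:x,y\in E\}$. $E$ satisfies property $[\mathbb{H}]$ if for every bounded sequence $(\zeta_n)$ in $E$ there exist a subsequence $(\zeta_{n_k})$ and $\zeta\in E$ such that $\langle v,\zeta_{n_k}\rangle\to\langle v,\zeta\rangle$ for every $v\in E$. A closed submodule $F$ is an orthogonal summand if $E=F\oplus F^\perp$, where $F^\perp=\{y\in E:\langle x,y\rangle=0\ \forall x\in F\}$. *)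

theory Defs
  imports "HOL-Analysis.Analysis"
begin

text \<open>C*-algebra: a real Banach algebra 'a (the additive/norm/multiplicative structure
  comes from the type class) equipped with a complex scalar multiplication sc
  (extending the real one) and an involution st satisfying the C*-identity.\<close>

definition cstar_algebra ::
  "(complex \<Rightarrow> 'a::{real_normed_algebra,banach} \<Rightarrow> 'a) \<Rightarrow> ('a \<Rightarrow> 'a) \<Rightarrow> bool" where
  "cstar_algebra sc st \<longleftrightarrow>
     (\<forall>c d x. sc (c + d) x = sc c x + sc d x) \<and>
     (\<forall>c x y. sc c (x + y) = sc c x + sc c y) \<and>
     (\<forall>c d x. sc (c * d) x = sc c (sc d x)) \<and>
     (\<forall>r x. sc (complex_of_real r) x = scaleR r x) \<and>
     (\<forall>c x. norm (sc c x) = cmod c * norm x) \<and>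
     (\<forall>c x y. sc c (x * y) = sc c x * y \<and> sc c (x * y) = x * sc c y) \<and>
     (\<forall>x y. st (x + y) = st x + st y) \<and>
     (\<forall>c x. st (sc c x) = sc (cnj c) (st x)) \<and>
     (\<forall>x y. st (x * y) = st y * st x) \<and>
     (\<forall>x. st (st x) = x) \<and>
     (\<forall>x. norm (st x * x) = (norm x)\<^sup>2)"

definition cstar_positive :: "('a::{real_normed_algebra,banach} \<Rightarrow> 'a) \<Rightarrow> 'a \<Rightarrow> bool" where
  "cstar_positive st a \<longleftrightarrow> (\<exists>b. a = st b * b)"

text \<open>Right Hilbert module over the C*-algebra (sc, st): carrier type 'e, complex
  scalar multiplication scE, right action act, A-valued inner product ip; the type's
  norm is the inner-product norm and the type is complete.\<close>

definition hilbert_module ::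
  "(complex \<Rightarrow> 'a::{real_normed_algebra,banach} \<Rightarrow> 'a) \<Rightarrow> ('a \<Rightarrow> 'a) \<Rightarrow>
   (complex \<Rightarrow> 'e::banach \<Rightarrow> 'e) \<Rightarrow> ('e \<Rightarrow> 'a \<Rightarrow> 'e) \<Rightarrow> ('e \<Rightarrow> 'e \<Rightarrow> 'a) \<Rightarrow> bool" where
  "hilbert_module sc st scE act ip \<longleftrightarrow>
     (\<forall>c d x. scE (c + d) x = scE c x + scE d x) \<and>
     (\<forall>c x y. scE c (x + y) = scE c x + scE c y) \<and>
     (\<forall>c d x. scE (c * d) x = scE c (scE d x)) \<and>
     (\<forall>r x. scE (complex_of_real r) x = scaleR r x) \<and>
     (\<forall>x y a. act (x + y) a = act x a + act y a) \<and>
     (\<forall>x a b. act x (a + b) = act x a + act x b) \<and>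
     (\<forall>x a b. act x (a * b) = act (act x a) b) \<and>
     (\<forall>c x a. scE c (act x a) = act (scE c x) a \<and> scE c (act x a) = act x (sc c a)) \<and>
     (\<forall>x y z. ip x (y + z) = ip x y + ip x z) \<and>
     (\<forall>c x y. ip x (scE c y) = sc c (ip x y)) \<and>
     (\<forall>x y a. ip x (act y a) = ip x y * a) \<and>
     (\<forall>x y. ip y x = st (ip x y)) \<and>
     (\<forall>x. cstar_positive st (ip x x)) \<and>
     (\<forall>x. ip x x = 0 \<longleftrightarrow> x = 0) \<and>
     (\<forall>x. norm x = sqrt (norm (ip x x)))"

definition property_H :: "('e::banach \<Rightarrow> 'e \<Rightarrow> 'a::{real_normed_algebra,banach}) \<Rightarrow> bool" where
  "property_H ip \<longleftrightarrow>
     (\<forall>\<zeta>::nat \<Rightarrow> 'e. (\<exists>B. \<forall>n. norm (\<zeta> n) \<le> B) \<longrightarrow>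
        (\<exists>r \<zeta>0. strict_mono r \<and> (\<forall>v. (\<lambda>k. ip v (\<zeta> (r k))) \<longlonglongrightarrow> ip v \<zeta>0)))"

definition adjointable :: "('e \<Rightarrow> 'e \<Rightarrow> 'a) \<Rightarrow> ('e \<Rightarrow> 'e) \<Rightarrow> bool" where
  "adjointable ip T \<longleftrightarrow> (\<exists>S. \<forall>x y. ip (T x) y = ip x (S y))"

definition adjoint :: "('e \<Rightarrow> 'e \<Rightarrow> 'a) \<Rightarrow> ('e \<Rightarrow> 'e) \<Rightarrow> ('e \<Rightarrow> 'e)" where
  "adjoint ip T = (SOME S. \<forall>x y. ip (T x) y = ip x (S y))"

definition theta :: "('e \<Rightarrow> 'a \<Rightarrow> 'e) \<Rightarrow> ('e \<Rightarrow> 'e \<Rightarrow> 'a) \<Rightarrow> 'e \<Rightarrow> 'e \<Rightarrow> 'e \<Rightarrow> 'e" where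
  "theta act ip x y = (\<lambda>z. act x (ip y z))"

definition finite_rank_op ::
  "(complex \<Rightarrow> 'e::banach \<Rightarrow> 'e) \<Rightarrow> ('e \<Rightarrow> 'a \<Rightarrow> 'e) \<Rightarrow> ('e \<Rightarrow> 'e \<Rightarrow> 'a) \<Rightarrow> ('e \<Rightarrow> 'e) \<Rightarrow> bool" where
  "finite_rank_op scE act ip F \<longleftrightarrow>
     (\<exists>n::nat. \<exists>cs xs ys. F = (\<lambda>z. \<Sum>i<n. scE (cs i) (theta act ip (xs i) (ys i) z)))"

text \<open>Compact operators K(E): norm closure (in L(E), operator norm) of that span.\<close>
definition compact_op ::
  "(complex \<Rightarrow> 'e::banach \<Rightarrow> 'e) \<Rightarrow> ('e \<Rightarrow> 'a \<Rightarrow> 'e) \<Rightarrow> ('e \<Rightarrow> 'e \<Rightarrow> 'a) \<Rightarrow> ('e \<Rightarrow> 'e) \<Rightarrow> bool" where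
  "compact_op scE act ip T \<longleftrightarrow> adjointable ip T \<and>
     (\<forall>\<epsilon>>0. \<exists>F. finite_rank_op scE act ip F \<and> (\<forall>z. norm (T z - F z) \<le> \<epsilon> * norm z))"

definition orth :: "('e::banach \<Rightarrow> 'e \<Rightarrow> 'a::{real_normed_algebra,banach}) \<Rightarrow> 'e set \<Rightarrow> 'e set" where
  "orth ip F = {y. \<forall>x\<in>F. ip x y = 0}"

definition direct_sum :: "'e::banach set \<Rightarrow> 'e set \<Rightarrow> bool" where
  "direct_sum F G \<longleftrightarrow> (\<forall>x. \<exists>y\<in>F. \<exists>z\<in>G. x = y + z) \<and> F \<inter> G = {0}"

definition orth_summand :: "('e::banach \<Rightarrow> 'e \<Rightarrow> 'a::{real_normed_algebra,banach}) \<Rightarrow> 'e set \<Rightarrow> bool" where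
  "orth_summand ip F \<longleftrightarrow> direct_sum F (orth ip F)"

end

theory Submission
  imports Defs
begin

(* Under property [H] every element of K(E) is compact in the classical
   sequential sense: a bounded sequence has a subsequence converging weakly,
   i.e. against every <v, _>, and along it every finite-rank operator converges
   in norm; uniform approximation passes this on to C, and also to C*, which is
   again in K(E).  The polarization identity gives |<x,y>| <= 4 |x| |y| without
   the order structure of the C*-algebra that Cauchy-Schwarz would need, and
   this suffices for all continuity arguments.

   Riesz theory of I - K for compact K gives closed ranges.  Substituting
   z := z / l turns l - C into I - C1 with C1 compact, so let T = I - C1.  Then
   S = T T* is of the form I - K with K compact, and it is self-adjoint, hence
   injective on its closed range R; the descending chain argument based on
   Riesz's lemma shows S R = R.  So every x satisfies S x = S r for some r in R,
   a subset of Ran T, and x - r lies in Ker S = Ker T* = (Ran T)^perp. *)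

section \<open>Riesz theory of compact operators\<close>

definition compact_operator :: "('a::real_normed_vector \<Rightarrow> 'b::real_normed_vector) \<Rightarrow> bool" where
  "compact_operator K \<longleftrightarrow>
     (\<forall>(\<zeta> :: nat \<Rightarrow> 'a) B. (\<forall>n. norm (\<zeta> n) \<le> B) \<longrightarrow>
        (\<exists>r l. strict_mono r \<and> (\<lambda>n. K (\<zeta> (r n))) \<longlonglongrightarrow> l))"

lemma compact_operatorI:
  fixes K :: "'a::real_normed_vector \<Rightarrow> 'b::real_normed_vector"
  assumes "\<And>(\<zeta> :: nat \<Rightarrow> 'a) B. (\<And>n. norm (\<zeta> n) \<le> B) \<Longrightarrow>
             \<exists>r l. strict_mono r \<and> (\<lambda>n. K (\<zeta> (r n))) \<longlonglongrightarrow> l"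
  shows "compact_operator K"
  using assms unfolding compact_operator_def by blast

lemma compact_operatorE:
  fixes K :: "'a::real_normed_vector \<Rightarrow> 'b::real_normed_vector" and \<zeta> :: "nat \<Rightarrow> 'a"
  assumes "compact_operator K" "\<And>n. norm (\<zeta> n) \<le> B"
  obtains r l where "strict_mono r" "(\<lambda>n. K (\<zeta> (r n))) \<longlonglongrightarrow> l"
  using assms unfolding compact_operator_def by blast

lemma compact_operator_add:
  fixes K L :: "'a::real_normed_vector \<Rightarrow> 'b::real_normed_vector"
  assumes K: "compact_operator K" and L: "compact_operator L"
  shows "compact_operator (\<lambda>x. K x + L x)"
proof (rule compact_operatorI)
  fix \<zeta> :: "nat \<Rightarrow> 'a" and B assume bound: "\<And>n. norm (\<zeta> n) \<le> B"
  obtain r l where r: "strict_mono r" and l: "(\<lambda>n. K (\<zeta> (r n))) \<longlonglongrightarrow> l"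
    using K bound by (rule compact_operatorE)
  obtain s m where s: "strict_mono s" and m: "(\<lambda>n. L (\<zeta> (r (s n)))) \<longlonglongrightarrow> m"
    using L bound by (rule compact_operatorE)
  have "(\<lambda>n. K (\<zeta> (r (s n)))) \<longlonglongrightarrow> l"
    using LIMSEQ_subseq_LIMSEQ[OF l s] by (simp add: o_def)
  then have "(\<lambda>n. K (\<zeta> (r (s n))) + L (\<zeta> (r (s n)))) \<longlonglongrightarrow> l + m"
    using m by (rule tendsto_add)
  then show "\<exists>r l. strict_mono r \<and> (\<lambda>n. K (\<zeta> (r n)) + L (\<zeta> (r n))) \<longlonglongrightarrow> l"
    using strict_mono_o[OF r s] unfolding o_def by blast
qed

lemma compact_operator_compose_left:
  fixes K :: "'a::real_normed_vector \<Rightarrow> 'b::real_normed_vector"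
    and L :: "'b \<Rightarrow> 'c::real_normed_vector"
  assumes "bounded_linear L" "compact_operator K"
  shows "compact_operator (\<lambda>x. L (K x))"
proof (rule compact_operatorI)
  fix \<zeta> :: "nat \<Rightarrow> 'a" and B assume "\<And>n. norm (\<zeta> n) \<le> B"
  with assms(2) obtain r l where "strict_mono r" "(\<lambda>n. K (\<zeta> (r n))) \<longlonglongrightarrow> l"
    by (rule compact_operatorE)
  then show "\<exists>r l. strict_mono r \<and> (\<lambda>n. L (K (\<zeta> (r n)))) \<longlonglongrightarrow> l"
    using bounded_linear.tendsto[OF assms(1)] by blast
qed

lemma compact_operator_compose_right:
  fixes L :: "'a::real_normed_vector \<Rightarrow> 'b::real_normed_vector"
    and K :: "'b \<Rightarrow> 'c::real_normed_vector"
  assumes "bounded_linear L" "compact_operator K"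
  shows "compact_operator (\<lambda>x. K (L x))"
proof (rule compact_operatorI)
  fix \<zeta> :: "nat \<Rightarrow> 'a" and B assume bound: "\<And>n. norm (\<zeta> n) \<le> B"
  obtain M where M: "\<And>x. norm (L x) \<le> norm x * M" "M > 0"
    using bounded_linear.pos_bounded[OF assms(1)] by blast
  have "norm (L (\<zeta> n)) \<le> B * M" for n
    using M(1)[of "\<zeta> n"] mult_right_mono[OF bound[of n] less_imp_le[OF M(2)]] by linarith
  with assms(2) obtain r l where "strict_mono r" "(\<lambda>n. K (L (\<zeta> (r n)))) \<longlonglongrightarrow> l"
    by (rule compact_operatorE)
  then show "\<exists>r l. strict_mono r \<and> (\<lambda>n. K (L (\<zeta> (r n)))) \<longlonglongrightarrow> l"
    by blast
qed

lemma bounded_linear_if_approx: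
  fixes K F :: "'a::real_normed_vector \<Rightarrow> 'b::real_normed_vector"
  assumes K: "linear K" and F: "bounded_linear F" and approx: "\<And>z. norm (K z - F z) \<le> e * norm z"
  shows "bounded_linear K"
proof -
  obtain M where M: "\<And>z. norm (F z) \<le> norm z * M"
    using bounded_linear.bounded[OF F] by blast
  have "norm (K z) \<le> norm z * (e + M)" for z
    using norm_triangle_sub[of "K z" "F z"] approx[of z] M[of z] by (simp add: algebra_simps)
  then show ?thesis
    by (intro bounded_linear_intro[where K="e + M"] linear_add[OF K] linear_scale[OF K])
qed

lemma Cauchy_if_approx:
  fixes K :: "'a::real_normed_vector \<Rightarrow> 'b::real_normed_vector" and \<zeta> :: "nat \<Rightarrow> 'a"
  assumes bound: "\<And>n. norm (\<zeta> n) \<le> B"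
    and approx: "\<And>e. e > 0 \<Longrightarrow> \<exists>F. (\<forall>z. norm (K z - F z) \<le> e * norm z) \<and> convergent (\<lambda>n. F (\<zeta> n))"
  shows "Cauchy (\<lambda>n. K (\<zeta> n))"
proof (rule CauchyI)
  fix e :: real assume e: "e > 0"
  define d where "d = e / (3 * (\<bar>B\<bar> + 1))"
  have d: "d > 0" using e by (simp add: d_def)
  obtain F where F: "\<And>z. norm (K z - F z) \<le> d * norm z" and conv: "convergent (\<lambda>n. F (\<zeta> n))"
    using approx[OF d] by blast
  obtain M where M: "\<And>m n. M \<le> m \<Longrightarrow> M \<le> n \<Longrightarrow> norm (F (\<zeta> m) - F (\<zeta> n)) < e/3"
    using CauchyD[OF convergent_Cauchy[OF conv], of "e/3"] e by auto
  have close: "norm (K (\<zeta> n) - F (\<zeta> n)) < e/3" for n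
  proof -
    have "d * norm (\<zeta> n) < d * (\<bar>B\<bar> + 1)"
      using bound[of n] d by (intro mult_strict_left_mono) auto
    moreover have "d * (\<bar>B\<bar> + 1) = e/3"
      unfolding d_def by (simp add: add_pos_nonneg field_simps)
    ultimately show ?thesis using F[of "\<zeta> n"] by linarith
  qed
  have "norm (K (\<zeta> m) - K (\<zeta> n)) < e" if "M \<le> m" "M \<le> n" for m n
  proof -
    have eq: "K (\<zeta> m) - K (\<zeta> n) =
        (K (\<zeta> m) - F (\<zeta> m)) + (F (\<zeta> m) - F (\<zeta> n)) - (K (\<zeta> n) - F (\<zeta> n))"
      by simp
    have "norm (K (\<zeta> m) - K (\<zeta> n)) \<le>
        norm (K (\<zeta> m) - F (\<zeta> m)) + norm (F (\<zeta> m) - F (\<zeta> n)) + norm (K (\<zeta> n) - F (\<zeta> n))"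
      unfolding eq by (intro order_trans[OF norm_triangle_ineq4] add_right_mono norm_triangle_ineq)
    then show ?thesis using close[of m] close[of n] M[OF that] by linarith
  qed
  then show "\<exists>M. \<forall>m\<ge>M. \<forall>n\<ge>M. norm (K (\<zeta> m) - K (\<zeta> n)) < e" by blast
qed

lemma infdist_less_iff:
  assumes "A \<noteq> {}"
  shows "infdist x A < e \<longleftrightarrow> (\<exists>a\<in>A. dist x a < e)"
proof -
  have "bdd_below (dist x ` A)" by (rule bdd_belowI2[where m=0]) simp
  with assms show ?thesis by (simp add: infdist_notempty cINF_less_iff)
qed

lemma riesz_lemma:
  fixes Y :: "'a::real_normed_vector set"
  assumes Y: "subspace Y" "closed Y" and x: "x \<notin> Y"
  obtains y where "y \<in> Y" "\<And>z. z \<in> Y \<Longrightarrow> 1/2 \<le> norm (sgn (x - y) - z)"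
proof -
  have Yne: "Y \<noteq> {}" using subspace_0[OF Y(1)] by blast
  have "infdist x Y > 0" by (rule infdist_pos_not_in_closed[OF Y(2) Yne x])
  then have "infdist x Y < 2 * infdist x Y" by simp
  then obtain y where y: "y \<in> Y" "norm (x - y) < 2 * infdist x Y"
    by (auto simp: infdist_less_iff[OF Yne] dist_norm)
  define a where "a = norm (x - y)"
  have a: "a > 0" using x y(1) by (auto simp: a_def)
  have "1/2 \<le> norm (sgn (x - y) - z)" if z: "z \<in> Y" for z
  proof -
    have "y + a *\<^sub>R z \<in> Y" using Y(1) y(1) z by (simp add: subspace_add subspace_scale)
    then have "infdist x Y \<le> norm (x - (y + a *\<^sub>R z))"
      using infdist_le by (fastforce simp: dist_norm)
    also have "x - (y + a *\<^sub>R z) = a *\<^sub>R (sgn (x - y) - z)"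
      using a by (simp add: sgn_div_norm a_def algebra_simps)
    finally have "infdist x Y \<le> a * norm (sgn (x - y) - z)"
      using a by simp
    with y(2) have "a * 1 < a * (2 * norm (sgn (x - y) - z))"
      by (simp add: a_def)
    then show ?thesis using a by (simp only: mult_less_cancel_left_pos)
  qed
  with y that show ?thesis by blast
qed

lemma compact_operator_no_strict_descending_chain:
  fixes K :: "'a::real_normed_vector \<Rightarrow> 'a" and Y :: "nat \<Rightarrow> 'a set"
  assumes K: "compact_operator K"
    and Y: "\<And>n. subspace (Y n)" "\<And>n. closed (Y n)" "\<And>n. Y (Suc n) \<subset> Y n"
    and image: "\<And>n. (\<lambda>x. x - K x) ` Y n \<subseteq> Y (Suc n)"
  shows False
proof -
  have "\<exists>x\<in>Y n. norm x = 1 \<and> (\<forall>z\<in>Y (Suc n). 1/2 \<le> norm (x - z))" for n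
  proof -
    obtain v where v: "v \<in> Y n" "v \<notin> Y (Suc n)" using Y(3) by blast
    then obtain y where y: "y \<in> Y (Suc n)" "\<And>z. z \<in> Y (Suc n) \<Longrightarrow> 1/2 \<le> norm (sgn (v - y) - z)"
      using riesz_lemma[OF Y(1,2)] by metis
    have "sgn (v - y) \<in> Y n"
      using Y(1,3) v(1) y(1) by (auto simp: sgn_div_norm intro!: subspace_scale subspace_diff)
    moreover have "norm (sgn (v - y)) = 1" using v(2) y(1) by (auto simp: norm_sgn)
    ultimately show ?thesis using y(2) by blast
  qed
  then obtain x where x: "\<And>n. x n \<in> Y n" "\<And>n. norm (x n) = 1"
    and far: "\<And>n z. z \<in> Y (Suc n) \<Longrightarrow> 1/2 \<le> norm (x n - z)"
    by metis
  have "norm (x n) \<le> 1" for n using x(2) by simp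
  with K obtain r l where r: "strict_mono r" and l: "(\<lambda>n. K (x (r n))) \<longlonglongrightarrow> l"
    by (rule compact_operatorE)
  obtain M where M: "\<And>i j. i \<ge> M \<Longrightarrow> j \<ge> M \<Longrightarrow> norm (K (x (r i)) - K (x (r j))) < 1/2"
    using CauchyD[OF LIMSEQ_imp_Cauchy[OF l], of "1/2"] by (auto simp: dist_norm)
  define n m where "n = r M" and "m = r (Suc M)"
  have "Suc n \<le> m" using r by (simp add: n_def m_def strict_mono_def Suc_leI)
  then have "Y m \<subseteq> Y (Suc n)" "Y (Suc m) \<subseteq> Y (Suc n)"
    using lift_Suc_antimono_le[of Y, OF less_imp_le[OF Y(3)]] by auto
  then have "x n - K (x n) \<in> Y (Suc n)" "x m \<in> Y (Suc n)" "x m - K (x m) \<in> Y (Suc n)"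
    using image x(1) by blast+
  then have "(x n - K (x n)) + x m - (x m - K (x m)) \<in> Y (Suc n)"
    by (meson Y(1) subspace_add subspace_diff)
  from far[OF this] have "1/2 \<le> norm (K (x n) - K (x m))"
    by (simp add: algebra_simps)
  with M[of M "Suc M"] show False by (simp add: n_def m_def)
qed

lemma bounded_linear_id_minus:
  assumes "bounded_linear K"
  shows "bounded_linear (\<lambda>x. x - K x)"
  by (rule bounded_linear_sub[OF bounded_linear_ident assms])

lemma id_minus_compact_convergent_subseq:
  fixes K :: "'a::real_normed_vector \<Rightarrow> 'a"
  assumes K: "bounded_linear K" "compact_operator K"
    and bound: "\<And>n. norm (z n) \<le> B" and lim: "(\<lambda>n. z n - K (z n)) \<longlonglongrightarrow> v"
  obtains r z0 where "strict_mono r" "(\<lambda>n. z (r n)) \<longlonglongrightarrow> z0" "z0 - K z0 = v"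
proof -
  obtain r l where r: "strict_mono r" and l: "(\<lambda>n. K (z (r n))) \<longlonglongrightarrow> l"
    using K(2) bound by (rule compact_operatorE)
  have "(\<lambda>n. z (r n) - K (z (r n))) \<longlonglongrightarrow> v"
    using LIMSEQ_subseq_LIMSEQ[OF lim r] by (simp add: o_def)
  from tendsto_add[OF this l] have z: "(\<lambda>n. z (r n)) \<longlonglongrightarrow> v + l"
    by simp
  have "(\<lambda>n. z (r n) - K (z (r n))) \<longlonglongrightarrow> (v + l) - K (v + l)"
    by (intro tendsto_diff z bounded_linear.tendsto[OF K(1)])
  with \<open>(\<lambda>n. z (r n) - K (z (r n))) \<longlonglongrightarrow> v\<close> have "(v + l) - K (v + l) = v"
    using LIMSEQ_unique by blast
  with r z that show ?thesis by blast
qed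

lemma id_minus_compact_approaches_kernel:
  fixes K :: "'a::real_normed_vector \<Rightarrow> 'a"
  assumes K: "bounded_linear K" "compact_operator K" and X: "closed X"
    and w: "\<And>n. w n \<in> X" "\<And>n. norm (w n) \<le> B" and lim: "(\<lambda>n. w n - K (w n)) \<longlonglongrightarrow> 0"
    and e: "e > 0"
  shows "\<exists>n z. z \<in> X \<and> z - K z = 0 \<and> norm (w n - z) < e"
proof -
  obtain r z where r: "strict_mono r" and z: "(\<lambda>n. w (r n)) \<longlonglongrightarrow> z" "z - K z = 0"
    using id_minus_compact_convergent_subseq[OF K w(2) lim] .
  have "z \<in> X" using closed_sequentially[OF X _ z(1)] w(1) by blast
  moreover obtain j where "norm (w (r j) - z) < e"
    using LIMSEQ_D[OF z(1) e] by auto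
  ultimately show ?thesis using z(2) by blast
qed

lemma id_minus_compact_infdist_kernel_le:
  fixes K :: "'a::real_normed_vector \<Rightarrow> 'a"
  assumes K: "bounded_linear K" "compact_operator K" and X: "subspace X" "closed X"
  obtains c where "\<And>x. x \<in> X \<Longrightarrow> infdist x (X \<inter> {x. x - K x = 0}) \<le> c * norm (x - K x)"
proof -
  define T where "T x = x - K x" for x
  define N where "N = X \<inter> {x. T x = 0}"
  have T: "bounded_linear T"
    unfolding T_def[abs_def] by (rule bounded_linear_id_minus[OF K(1)])
  then interpret T: bounded_linear T .
  have N: "subspace N" "closed N"
    unfolding N_def using X T.linear_axioms
    by (simp_all add: subspace_inter linear_subspace_kernel closed_Int closed_Collect_eq
        linear_continuous_on T)
  have "\<exists>c. \<forall>x\<in>X. infdist x N \<le> c * norm (T x)"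
  proof (rule ccontr)
    assume "\<nexists>c. \<forall>x\<in>X. infdist x N \<le> c * norm (T x)"
    then have "\<forall>n. \<exists>x\<in>X. real (Suc n) * norm (T x) < infdist x N"
      by (meson not_le)
    then obtain x where xX: "\<And>n. x n \<in> X"
      and x: "\<And>n. real (Suc n) * norm (T (x n)) < infdist (x n) N"
      by metis
    have xN: "x n \<notin> N" for n using x[of n] by (auto simp: N_def)
    then have "\<exists>y\<in>N. \<forall>z\<in>N. 1/2 \<le> norm (sgn (x n - y) - z)" for n
      by (metis riesz_lemma[OF N])
    then obtain y where yN: "\<And>n. y n \<in> N"
      and far: "\<And>n z. z \<in> N \<Longrightarrow> 1/2 \<le> norm (sgn (x n - y n) - z)"
      by metis
    have y: "infdist (x n) N \<le> norm (x n - y n)" for n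
      using infdist_le[OF yN] by (simp add: dist_norm)
    define w where "w n = sgn (x n - y n)" for n
    have wX: "w n \<in> X" for n
      using xX yN X(1) by (auto simp: w_def N_def sgn_div_norm intro!: subspace_scale subspace_diff)
    have nw: "norm (w n) = 1" for n using xN[of n] yN[of n] by (auto simp: w_def norm_sgn)
    have "norm (T (w n)) \<le> inverse (real (Suc n))" for n
    proof -
      have "T (w n) = T (x n) /\<^sub>R norm (x n - y n)"
        using yN[of n] by (simp add: w_def sgn_div_norm N_def T.scaleR T.diff)
      moreover have "real (Suc n) * norm (T (x n)) < norm (x n - y n)"
        using x[of n] y[of n] by linarith
      moreover have "norm (x n - y n) > 0" using xN[of n] yN[of n] by auto
      ultimately show ?thesis by (simp add: field_simps)
    qed
    then have Tw: "(\<lambda>n. w n - K (w n)) \<longlonglongrightarrow> 0"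
      unfolding T_def[symmetric]
      by (intro Lim_null_comparison[OF always_eventually LIMSEQ_inverse_real_of_nat]) auto
    have w1: "norm (w n) \<le> 1" for n using nw by simp
    obtain j z where "z \<in> X" "z - K z = 0" "norm (w j - z) < 1/2"
      using id_minus_compact_approaches_kernel[OF K X(2) wX w1 Tw, of "1/2"] by auto
    then show False using far[of z j] by (simp add: w_def N_def T_def)
  qed
  with that show ?thesis by (auto simp: N_def T_def)
qed

lemma closed_image_id_minus_compact:
  fixes K :: "'a::real_normed_vector \<Rightarrow> 'a"
  assumes K: "bounded_linear K" "compact_operator K" and X: "subspace X" "closed X"
  shows "closed ((\<lambda>x. x - K x) ` X)"
  unfolding closed_sequential_limits
proof (intro allI impI, elim conjE)
  fix y v assume y: "\<forall>n. y n \<in> (\<lambda>x. x - K x) ` X" and v: "y \<longlonglongrightarrow> v"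
  define N where "N = X \<inter> {x. x - K x = 0}"
  obtain c where c: "\<And>x. x \<in> X \<Longrightarrow> infdist x N \<le> c * norm (x - K x)"
    using id_minus_compact_infdist_kernel_le[OF K X] unfolding N_def by blast
  have "\<forall>n. \<exists>x\<in>X. y n = x - K x" using y by blast
  then obtain x where xX: "\<And>n. x n \<in> X" and yx: "\<And>n. y n = x n - K (x n)"
    by metis
  have "0 \<in> N"
    using subspace_0[OF X(1)] linear_0[OF bounded_linear.linear[OF K(1)]] by (simp add: N_def)
  then have "N \<noteq> {}" by blast
  then have "\<exists>k\<in>N. dist (x n) k < infdist (x n) N + 1" for n
    by (simp add: infdist_less_iff[symmetric])
  then obtain k where kN: "\<And>n. k n \<in> N" and k: "\<And>n. norm (x n - k n) < infdist (x n) N + 1"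
    by (metis dist_norm)
  obtain B where B: "\<And>n. norm (y n) \<le> B"
    using convergent_imp_Bseq[OF convergentI[OF v]] by (meson BseqE)
  have "norm (x n - k n) \<le> \<bar>c\<bar> * B + 1" for n
  proof -
    have "c * norm (y n) \<le> \<bar>c\<bar> * norm (y n)" by (simp add: mult_right_mono)
    also have "\<dots> \<le> \<bar>c\<bar> * B" by (simp add: B mult_left_mono)
    finally have "c * norm (y n) \<le> \<bar>c\<bar> * B" .
    moreover have "infdist (x n) N \<le> c * norm (y n)" using c[OF xX, of n] by (simp add: yx)
    ultimately show ?thesis using k[of n] by linarith
  qed
  moreover have "(x n - k n) - K (x n - k n) = y n" for n
    using kN[of n]
    by (simp add: N_def yx linear_diff[OF bounded_linear.linear[OF K(1)]] algebra_simps)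
  then have "(\<lambda>n. (x n - k n) - K (x n - k n)) \<longlonglongrightarrow> v"
    using v by simp
  ultimately obtain r z0
    where r: "strict_mono r" and z0: "(\<lambda>n. x (r n) - k (r n)) \<longlonglongrightarrow> z0" "z0 - K z0 = v"
    by (rule id_minus_compact_convergent_subseq[OF K])
  have "z0 \<in> X"
    using closed_sequentially[OF X(2) _ z0(1)] xX kN X(1) by (auto simp: N_def subspace_diff)
  with z0(2) show "v \<in> (\<lambda>x. x - K x) ` X" by blast
qed

lemma id_minus_compact_image_eq_if_inj_on:
  fixes K :: "'a::real_normed_vector \<Rightarrow> 'a"
  assumes K: "bounded_linear K" "compact_operator K" and R: "subspace R" "closed R"
    and into: "(\<lambda>x. x - K x) ` R \<subseteq> R" and inj: "inj_on (\<lambda>x. x - K x) R"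
  shows "(\<lambda>x. x - K x) ` R = R"
proof (rule ccontr)
  assume onto: "(\<lambda>x. x - K x) ` R \<noteq> R"
  define T where "T = (\<lambda>x. x - K x)"
  define Y where "Y n = ((`) T ^^ n) R" for n
  have Y_Suc: "Y (Suc n) = T ` Y n" for n by (simp add: Y_def)
  have T: "linear T"
    unfolding T_def by (rule bounded_linear.linear[OF bounded_linear_id_minus[OF K(1)]])
  have sub: "subspace (Y n)" and cl: "closed (Y n)" and YR: "Y n \<subseteq> R" for n
  proof (induction n)
    case 0 show "subspace (Y 0)" "closed (Y 0)" "Y 0 \<subseteq> R" by (simp_all add: Y_def R)
  next
    case (Suc n)
    show "subspace (Y (Suc n))" using Suc.IH(1) T by (simp add: Y_Suc linear_subspace_image)
    show "closed (Y (Suc n))"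
      using closed_image_id_minus_compact[OF K Suc.IH(1,2)] by (simp add: Y_Suc T_def)
    show "Y (Suc n) \<subseteq> R" using Suc.IH(3) into by (auto simp: Y_Suc T_def)
  qed
  have strict: "Y (Suc n) \<subset> Y n" for n
  proof (induction n)
    case 0 show ?case using into onto by (auto simp: Y_def T_def)
  next
    case (Suc n)
    have "inj_on T R" using inj by (simp add: T_def)
    then have "T ` Y (Suc n) \<subset> T ` Y n"
      using Suc.IH inj_on_image_eq_iff[OF _ YR YR] image_mono[of "Y (Suc n)" "Y n" T] by blast
    then show ?case by (metis Y_Suc)
  qed
  have "(\<lambda>x. x - K x) ` Y n \<subseteq> Y (Suc n)" for n by (simp add: Y_Suc T_def)
  from compact_operator_no_strict_descending_chain[of K Y, OF K(2) sub cl strict this] show False .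
qed

section \<open>Hilbert C*-modules\<close>

lemma direct_sum_sym:
  assumes "direct_sum F G"
  shows "direct_sum G F"
proof -
  have "\<exists>z\<in>G. \<exists>y\<in>F. x = z + y" for x
    using assms unfolding direct_sum_def by (metis add.commute)
  with assms show ?thesis unfolding direct_sum_def by (simp add: Int_commute)
qed

locale cstar_hilbert_module =
  fixes sc :: "complex \<Rightarrow> 'a::{real_normed_algebra,banach} \<Rightarrow> 'a"
    and st :: "'a \<Rightarrow> 'a"
    and scE :: "complex \<Rightarrow> 'e::banach \<Rightarrow> 'e"
    and act :: "'e \<Rightarrow> 'a \<Rightarrow> 'e"
    and ip :: "'e \<Rightarrow> 'e \<Rightarrow> 'a"
  assumes cstar_algebra: "cstar_algebra sc st"
    and hilbert_module: "hilbert_module sc st scE act ip"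
begin

lemma sc_add: "sc c (a + b) = sc c a + sc c b"
  and sc_mult: "sc (c * d) a = sc c (sc d a)"
  and sc_of_real: "sc (complex_of_real r) a = r *\<^sub>R a"
  and norm_sc: "norm (sc c a) = cmod c * norm a"
  and st_add: "st (a + b) = st a + st b"
  and st_sc: "st (sc c a) = sc (cnj c) (st a)"
  and st_mult: "st (a * b) = st b * st a"
  and st_st: "st (st a) = a"
  and norm_st_mult_self: "norm (st a * a) = (norm a)\<^sup>2"
  using cstar_algebra unfolding cstar_algebra_def by metis+

lemma scE_add: "scE c (x + y) = scE c x + scE c y"
  and scE_mult: "scE (c * d) x = scE c (scE d x)"
  and scE_of_real: "scE (complex_of_real r) x = r *\<^sub>R x"
  and act_add: "act x (a + b) = act x a + act x b"
  and scE_act: "scE c (act x a) = act x (sc c a)"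
  and ip_add: "ip x (y + z) = ip x y + ip x z"
  and ip_scE: "ip x (scE c y) = sc c (ip x y)"
  and ip_act: "ip x (act y a) = ip x y * a"
  and ip_commute: "ip y x = st (ip x y)"
  and ip_self_eq_0: "ip x x = 0 \<longleftrightarrow> x = 0"
  and norm_eq_sqrt_ip: "norm x = sqrt (norm (ip x x))"
  using hilbert_module unfolding hilbert_module_def by metis+

lemma sc_one [simp]: "sc 1 a = a"
  using sc_of_real[of 1 a] by simp

lemma scE_one [simp]: "scE 1 x = x"
  using scE_of_real[of 1 x] by simp

lemma sc_scaleR: "sc c (r *\<^sub>R a) = r *\<^sub>R sc c a"
  by (metis sc_of_real sc_mult mult.commute)

lemma scE_scaleR: "scE c (r *\<^sub>R x) = r *\<^sub>R scE c x"
  by (metis scE_of_real scE_mult mult.commute)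

lemma linear_sc: "linear (sc c)"
  by (rule linearI) (simp_all add: sc_add sc_scaleR)

lemma norm_st: "norm (st a) = norm a"
proof -
  have le: "norm b \<le> norm (st b)" for b
  proof (cases "b = 0")
    case False
    have "(norm b)\<^sup>2 \<le> norm (st b) * norm b"
      using norm_st_mult_self[of b] norm_mult_ineq[of "st b" b] by simp
    with False show ?thesis by (simp add: power2_eq_square)
  qed simp
  show ?thesis using le[of a] le[of "st a"] st_st[of a] by simp
qed

lemma ip_add_left: "ip (x + y) z = ip x z + ip y z"
  by (metis ip_commute ip_add st_add)

lemma ip_scE_left: "ip (scE c x) y = sc (cnj c) (ip x y)"
  by (metis ip_commute ip_scE st_sc st_st)

lemma ip_act_left: "ip (act x a) y = st a * ip x y"
  by (metis ip_commute ip_act st_mult)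

lemma linear_ip_right: "linear (ip x)"
  by (rule linearI) (simp_all add: ip_add flip: scE_of_real ip_scE sc_of_real)

lemma linear_ip_left: "linear (\<lambda>x. ip x y)"
  by (rule linearI) (simp_all add: ip_add_left flip: scE_of_real, simp add: ip_scE_left sc_of_real)

lemma norm_ip_self: "norm (ip x x) = (norm x)\<^sup>2"
  by (simp add: norm_eq_sqrt_ip)

lemma norm_scE: "norm (scE c x) = cmod c * norm x"
proof -
  have "norm (ip (scE c x) (scE c x)) = (cmod c * norm x)\<^sup>2"
    by (simp add: ip_scE ip_scE_left norm_sc norm_ip_self power2_eq_square)
  then show ?thesis by (simp add: norm_ip_self)
qed

lemma bounded_linear_scE: "bounded_linear (scE c)"
  by (rule bounded_linear_intro[where K="cmod c"]) (simp_all add: scE_add scE_scaleR norm_scE)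

lemma norm_act_le: "norm (act x a) \<le> norm x * norm a"
proof -
  have "(norm (act x a))\<^sup>2 = norm (st a * (ip x x * a))"
    by (simp only: norm_ip_self[symmetric] ip_act ip_act_left mult.assoc)
  also have "\<dots> \<le> norm (st a) * norm (ip x x * a)"
    by (rule norm_mult_ineq)
  also have "\<dots> \<le> norm a * (norm (ip x x) * norm a)"
    unfolding norm_st by (intro mult_left_mono norm_mult_ineq norm_ge_zero)
  also have "\<dots> = (norm x * norm a)\<^sup>2"
    by (simp add: norm_ip_self power2_eq_square ac_simps)
  finally show ?thesis by (rule power2_le_imp_le) simp
qed

lemma bounded_linear_act: "bounded_linear (act x)"
proof (rule bounded_linear_intro[where K="norm x"])
  show "act x (r *\<^sub>R a) = r *\<^sub>R act x a" for r a
    by (metis scE_act sc_of_real scE_of_real)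
  show "norm (act x a) \<le> norm a * norm x" for a
    using norm_act_le[of x a] by (simp add: mult.commute)
qed (simp add: act_add)

lemma ip_polarization:
  "4 *\<^sub>R ip x y =
     (ip (x + y) (x + y) - ip (x - y) (x - y)) +
     sc (- \<i>) (ip (x + scE \<i> y) (x + scE \<i> y) - ip (x - scE \<i> y) (x - scE \<i> y))"
proof -
  interpret right: linear "ip u" for u by (rule linear_ip_right)
  interpret left: linear "\<lambda>u. ip u v" for v by (rule linear_ip_left)
  interpret sc: linear "sc c" for c by (rule linear_sc)
  have diff: "ip (x + z) (x + z) - ip (x - z) (x - z) = 2 *\<^sub>R (ip x z + ip z x)" for z
    by (simp add: right.add right.diff left.add left.diff algebra_simps scaleR_2)
  have "sc (- \<i>) (sc \<i> a) = a" "sc (- \<i>) (sc (- \<i>) a) = - a" for a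
    by (simp_all flip: sc_mult) (metis sc_of_real of_real_1 of_real_minus scaleR_minus1_left)
  then have "sc (- \<i>) (2 *\<^sub>R (ip x (scE \<i> y) + ip (scE \<i> y) x)) = 2 *\<^sub>R (ip x y - ip y x)"
    by (simp add: ip_scE ip_scE_left sc.scale sc.add)
  then show ?thesis
    by (simp add: diff scaleR_add_right scaleR_diff_right algebra_simps flip: scaleR_add_left)
qed

lemma norm_ip_le_square: "norm (ip x y) \<le> (norm x + norm y)\<^sup>2"
proof -
  have sq: "norm (ip (x + z) (x + z)) \<le> (norm x + norm z)\<^sup>2"
      "norm (ip (x - z) (x - z)) \<le> (norm x + norm z)\<^sup>2" for z
    by (simp_all add: norm_ip_self norm_triangle_ineq norm_triangle_ineq4 power_mono)
  have "4 * norm (ip x y) = norm (4 *\<^sub>R ip x y)" by simp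
  also have "\<dots> \<le> norm (ip (x + y) (x + y)) + norm (ip (x - y) (x - y)) +
      (norm (ip (x + scE \<i> y) (x + scE \<i> y)) + norm (ip (x - scE \<i> y) (x - scE \<i> y)))"
    unfolding ip_polarization
    by (intro norm_triangle_le add_mono norm_triangle_ineq4) (simp add: norm_sc norm_triangle_ineq4)
  also have "\<dots> \<le> 4 * (norm x + norm y)\<^sup>2"
    using sq[of y] sq[of "scE \<i> y"] by (simp add: norm_scE)
  finally show ?thesis by simp
qed

lemma norm_ip_le: "norm (ip x y) \<le> 4 * norm x * norm y"
proof (cases "x = 0 \<or> y = 0")
  case True
  then show ?thesis using linear_0[OF linear_ip_left] linear_0[OF linear_ip_right] by auto
next
  case False
  have "ip (sgn x) (sgn y) = (inverse (norm x) * inverse (norm y)) *\<^sub>R ip x y"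
    by (simp add: sgn_div_norm linear_scale[OF linear_ip_left] linear_scale[OF linear_ip_right])
  then have "ip x y = (norm x * norm y) *\<^sub>R ip (sgn x) (sgn y)"
    using False by (simp add: field_simps)
  moreover have "norm (ip (sgn x) (sgn y)) \<le> 4"
    using norm_ip_le_square[of "sgn x" "sgn y"] False by (simp add: norm_sgn)
  ultimately show ?thesis
    using mult_left_mono[of "norm (ip (sgn x) (sgn y))" 4 "norm x * norm y"] by (simp add: mult_ac)
qed

lemma bounded_bilinear_ip: "bounded_bilinear ip"
proof
  show "ip (r *\<^sub>R x) y = r *\<^sub>R ip x y" "ip x (r *\<^sub>R y) = r *\<^sub>R ip x y" for r x y
    by (simp_all add: linear_scale[OF linear_ip_left] linear_scale[OF linear_ip_right])
  show "\<exists>K. \<forall>x y. norm (ip x y) \<le> norm x * norm y * K"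
    using norm_ip_le by (metis mult.commute mult.assoc)
qed (simp_all add: ip_add ip_add_left)

sublocale ip: bounded_bilinear ip
  by (rule bounded_bilinear_ip)

lemma ip_eqI:
  assumes "\<And>z. ip x z = ip y z"
  shows "x = y"
proof -
  have "ip (x - y) (x - y) = 0" by (simp add: ip.diff_left assms)
  then show ?thesis by (simp add: ip_self_eq_0)
qed

lemma adjoint_pair_sym:
  assumes "\<And>x y. ip (T x) y = ip x (S y)"
  shows "ip (S x) y = ip x (T y)"
  by (metis assms ip_commute)

lemma adjoint_pair_linear:
  assumes adj: "\<And>x y. ip (T x) y = ip x (S y)"
  shows "linear T"
proof
  show "T (x + y) = T x + T y" for x y
    by (rule ip_eqI) (simp add: adj ip.add_left)
  show "T (r *\<^sub>R x) = r *\<^sub>R T x" for r x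
    by (rule ip_eqI) (simp add: adj ip.scaleR_left)
qed

lemma ip_adjoint:
  assumes "adjointable ip T"
  shows "ip (T x) y = ip x (adjoint ip T y)"
proof -
  from assms have "\<forall>x y. ip (T x) y = ip x (adjoint ip T y)"
    unfolding adjointable_def adjoint_def by (rule someI_ex)
  then show ?thesis by blast
qed

lemma adjointable_adjoint:
  assumes "adjointable ip T"
  shows "adjointable ip (adjoint ip T)"
  unfolding adjointable_def using adjoint_pair_sym[OF ip_adjoint[OF assms]] by blast

lemma finite_rank_opE:
  assumes "finite_rank_op scE act ip F"
  obtains n :: nat and cs xs ys where "F = (\<lambda>z. \<Sum>i<n. scE (cs i) (act (xs i) (ip (ys i) z)))"
  using assms unfolding finite_rank_op_def theta_def by blast

lemma bounded_linear_finite_rank_op: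
  assumes "finite_rank_op scE act ip F"
  shows "bounded_linear F"
proof -
  obtain n :: nat and cs xs ys where "F = (\<lambda>z. \<Sum>i<n. scE (cs i) (act (xs i) (ip (ys i) z)))"
    using assms by (rule finite_rank_opE)
  then show ?thesis
    by (simp add: bounded_linear_sum bounded_linear_compose[OF bounded_linear_scE]
        bounded_linear_compose[OF bounded_linear_act] ip.bounded_linear_right)
qed

lemma finite_rank_op_weak_tendsto:
  assumes "finite_rank_op scE act ip F" and weak: "\<And>v. (\<lambda>n. ip v (\<zeta> n)) \<longlonglongrightarrow> ip v z"
  shows "(\<lambda>n. F (\<zeta> n)) \<longlonglongrightarrow> F z"
proof -
  obtain n :: nat and cs xs ys where "F = (\<lambda>z. \<Sum>i<n. scE (cs i) (act (xs i) (ip (ys i) z)))"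
    using assms(1) by (rule finite_rank_opE)
  then show ?thesis
    by (simp add: tendsto_sum bounded_linear.tendsto[OF bounded_linear_scE]
        bounded_linear.tendsto[OF bounded_linear_act] weak)
qed

lemma finite_rank_op_adjoint:
  assumes "finite_rank_op scE act ip F"
  obtains F' where "finite_rank_op scE act ip F'" "\<And>x y. ip (F x) y = ip x (F' y)"
proof -
  obtain n :: nat and cs xs ys where F: "F = (\<lambda>z. \<Sum>i<n. scE (cs i) (act (xs i) (ip (ys i) z)))"
    using assms by (rule finite_rank_opE)
  define F' where "F' z = (\<Sum>i<n. scE (cnj (cs i)) (act (ys i) (ip (xs i) z)))" for z
  have "finite_rank_op scE act ip F'"
    unfolding finite_rank_op_def theta_def F'_def by (intro exI) (rule refl)
  moreover have "ip (F x) y = ip x (F' y)" for x y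
    by (simp add: F F'_def ip.sum_left ip.sum_right ip_scE ip_scE_left ip_act ip_act_left)
      (metis ip_commute)
  ultimately show ?thesis using that by blast
qed

lemma orth_range_eq_kernel:
  assumes adj: "\<And>x y. ip (T x) y = ip x (T' y)"
  shows "orth ip (range T) = {y. T' y = 0}"
proof
  show "orth ip (range T) \<subseteq> {y. T' y = 0}"
  proof
    fix y assume "y \<in> orth ip (range T)"
    then have "ip (T (T' y)) y = 0" by (simp add: orth_def)
    then show "y \<in> {y. T' y = 0}" by (simp add: adj ip_self_eq_0)
  qed
  show "{y. T' y = 0} \<subseteq> orth ip (range T)"
    by (auto simp: orth_def adj ip.zero_right)
qed

lemma orth_summandI:
  assumes "0 \<in> F" and decomp: "\<And>x. \<exists>y\<in>F. x - y \<in> orth ip F"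
  shows "orth_summand ip F"
  unfolding orth_summand_def direct_sum_def
proof
  show "\<forall>x. \<exists>y\<in>F. \<exists>z\<in>orth ip F. x = y + z"
  proof
    fix x
    obtain y where "y \<in> F" "x - y \<in> orth ip F" using decomp by blast
    moreover have "x = y + (x - y)" by simp
    ultimately show "\<exists>y\<in>F. \<exists>z\<in>orth ip F. x = y + z" by blast
  qed
  show "F \<inter> orth ip F = {0}"
  proof
    show "F \<inter> orth ip F \<subseteq> {0}" using ip_self_eq_0 by (auto simp: orth_def)
    show "{0} \<subseteq> F \<inter> orth ip F" using assms(1) by (simp add: orth_def ip.zero_right)
  qed
qed

lemma selfadjoint_id_minus_compact_decomp:
  assumes K: "bounded_linear K" "compact_operator K"
    and sa: "\<And>x y. ip (x - K x) y = ip x (y - K y)"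
  shows "\<exists>v\<in>range (\<lambda>x. x - K x). (x - v) - K (x - v) = 0"
proof -
  define S where "S = (\<lambda>x. x - K x)"
  have S: "linear S"
    unfolding S_def by (rule bounded_linear.linear[OF bounded_linear_id_minus[OF K(1)]])
  have "r = 0" if r: "r \<in> range S" and Sr: "S r = 0" for r
  proof -
    obtain u where "r = S u" using r by blast
    then have "ip r r = ip u (S r)" by (simp add: S_def sa)
    with Sr show ?thesis by (simp add: ip_self_eq_0 ip.zero_right)
  qed
  then have "inj_on S (range S)"
    using linear_inj_on_iff_eq_0[OF S linear_subspace_image[OF S subspace_UNIV]] by blast
  moreover have "closed (range S)"
    using closed_image_id_minus_compact[OF K subspace_UNIV closed_UNIV] by (simp add: S_def)
  moreover have "S ` range S \<subseteq> range S" by blast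
  ultimately have "S ` range S = range S"
    using id_minus_compact_image_eq_if_inj_on[OF K linear_subspace_image[OF S subspace_UNIV],
        folded S_def]
    by (simp add: S_def)
  then obtain v where v: "v \<in> range S" "S x = S v"
    by (metis image_iff rangeI)
  then have "S (x - v) = 0" by (simp add: linear_diff[OF S])
  with v(1) show ?thesis by (auto simp: S_def)
qed

lemma orth_summand_range_id_minus_compact:
  assumes C: "bounded_linear C" "compact_operator C"
    and C': "bounded_linear C'" "compact_operator C'"
    and adj: "\<And>x y. ip (C x) y = ip x (C' y)"
  shows "orth_summand ip (range (\<lambda>z. z - C z))"
proof -
  define T T' K where "T z = z - C z" and "T' z = z - C' z" and "K z = C' z + C (T' z)" for z
  have adjT: "ip (T x) y = ip x (T' y)" for x y
    by (simp add: T_def T'_def ip.diff_left ip.diff_right adj)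
  have TT': "T (T' z) = z - K z" for z by (simp add: T_def T'_def K_def)
  have blT': "bounded_linear T'"
    unfolding T'_def[abs_def] by (rule bounded_linear_id_minus[OF C'(1)])
  have K: "bounded_linear K" "compact_operator K"
    unfolding K_def[abs_def]
    by (simp_all add: bounded_linear_add C'(1) bounded_linear_compose[OF C(1) blT']
        compact_operator_add C'(2) compact_operator_compose_right[OF blT' C(2)])
  have sa: "ip (x - K x) y = ip x (y - K y)" for x y
    by (metis TT' adjT adjoint_pair_sym)
  have kernel: "T' v = 0" if "v - K v = 0" for v
  proof -
    have "ip (T' v) (T' v) = ip v (v - K v)" by (simp add: adjT adjoint_pair_sym[OF adjT] TT')
    with that show ?thesis by (simp add: ip_self_eq_0 ip.zero_right)
  qed
  have "\<exists>y\<in>range T. x - y \<in> orth ip (range T)" for x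
  proof -
    obtain v where v: "v \<in> range (\<lambda>x. x - K x)" "(x - v) - K (x - v) = 0"
      using selfadjoint_id_minus_compact_decomp[OF K sa] by blast
    have "x - v \<in> orth ip (range T)"
      using kernel[OF v(2)] orth_range_eq_kernel[OF adjT] by blast
    moreover obtain u where "v = u - K u" using v(1) by blast
    then have "v \<in> range T" by (metis TT' rangeI)
    ultimately show ?thesis by blast
  qed
  moreover have "T 0 = 0" using linear_0[OF bounded_linear.linear[OF C(1)]] by (simp add: T_def)
  then have "0 \<in> range T" by (metis rangeI)
  ultimately show ?thesis unfolding T_def[abs_def] by (intro orth_summandI) auto
qed

section \<open>The compact operators K(E)\<close>

lemma compact_op_bounded_linear:
  assumes "compact_op scE act ip C"
  shows "bounded_linear C"
proof -
  have "linear C"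
    using assms adjoint_pair_linear[OF ip_adjoint] unfolding compact_op_def by blast
  moreover obtain F where "finite_rank_op scE act ip F" "\<And>z. norm (C z - F z) \<le> 1 * norm z"
    using assms unfolding compact_op_def by (meson zero_less_one)
  ultimately show ?thesis
    using bounded_linear_if_approx bounded_linear_finite_rank_op by blast
qed

lemma norm_adjoint_pair_le:
  assumes adj: "\<And>x y. ip (D x) y = ip x (D' y)" and bound: "\<And>z. norm (D z) \<le> d * norm z"
  shows "norm (D' z) \<le> 4 * d * norm z"
proof (cases "D' z = 0")
  case True
  have "0 \<le> d * norm z" using bound[of z] norm_ge_zero order_trans by blast
  with True show ?thesis by (simp add: mult.assoc)
next
  case False
  have "norm (D' z) * norm (D' z) = norm (ip (D (D' z)) z)"
    by (simp add: adj norm_ip_self power2_eq_square)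
  also have "\<dots> \<le> 4 * norm (D (D' z)) * norm z" by (rule norm_ip_le)
  also have "\<dots> \<le> 4 * (d * norm (D' z)) * norm z"
    using bound by (simp add: mult_right_mono)
  finally show ?thesis using False by (simp add: mult_ac)
qed

lemma compact_op_adjoint:
  assumes "compact_op scE act ip C"
  shows "compact_op scE act ip (adjoint ip C)"
proof -
  have adj: "adjointable ip C" and approx: "\<And>e. e > 0 \<Longrightarrow>
      \<exists>F. finite_rank_op scE act ip F \<and> (\<forall>z. norm (C z - F z) \<le> e * norm z)"
    using assms unfolding compact_op_def by blast+
  have "\<exists>F'. finite_rank_op scE act ip F' \<and> (\<forall>z. norm (adjoint ip C z - F' z) \<le> e * norm z)"
    if e: "e > 0" for e
  proof -
    obtain F where F: "finite_rank_op scE act ip F" and CF: "\<And>z. norm (C z - F z) \<le> e/4 * norm z"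
      using approx[of "e/4"] e by auto
    obtain F' where F': "finite_rank_op scE act ip F'" and FF': "\<And>x y. ip (F x) y = ip x (F' y)"
      using finite_rank_op_adjoint[OF F] by blast
    have "ip (C x - F x) y = ip x (adjoint ip C y - F' y)" for x y
      by (simp add: ip.diff_left ip.diff_right ip_adjoint[OF adj] FF')
    from norm_adjoint_pair_le[OF this CF] F' show ?thesis by auto
  qed
  with adjointable_adjoint[OF adj] show ?thesis unfolding compact_op_def by blast
qed

lemma compact_operator_if_compact_op:
  assumes H: "property_H ip" and C: "compact_op scE act ip C"
  shows "compact_operator C"
proof (rule compact_operatorI)
  fix \<zeta> :: "nat \<Rightarrow> 'e" and B assume bound: "\<And>n. norm (\<zeta> n) \<le> B"
  then obtain r z where r: "strict_mono r" and weak: "\<And>v. (\<lambda>n. ip v (\<zeta> (r n))) \<longlonglongrightarrow> ip v z"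
    using H unfolding property_H_def by blast
  have "Cauchy (\<lambda>n. C (\<zeta> (r n)))"
  proof (rule Cauchy_if_approx[where K=C and \<zeta>="\<lambda>n. \<zeta> (r n)"])
    show "norm (\<zeta> (r n)) \<le> B" for n by (rule bound)
    fix e :: real assume "e > 0"
    then obtain F where "finite_rank_op scE act ip F" "\<forall>z. norm (C z - F z) \<le> e * norm z"
      using C unfolding compact_op_def by blast
    then show "\<exists>F. (\<forall>z. norm (C z - F z) \<le> e * norm z) \<and> convergent (\<lambda>n. F (\<zeta> (r n)))"
      using finite_rank_op_weak_tendsto[OF _ weak] by (blast intro: convergentI)
  qed
  then show "\<exists>r l. strict_mono r \<and> (\<lambda>n. C (\<zeta> (r n))) \<longlonglongrightarrow> l"
    using r by (auto simp: Cauchy_convergent_iff convergent_def)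
qed

lemma closed_orth_summand_range_scE_minus:
  assumes H: "property_H ip" and C: "compact_op scE act ip C" and l: "l \<noteq> 0"
  shows "closed (range (\<lambda>z. scE l z - C z))" "orth_summand ip (range (\<lambda>z. scE l z - C z))"
proof -
  define C1 where "C1 z = C (scE (inverse l) z)" for z
  define C1' where "C1' z = scE (cnj (inverse l)) (adjoint ip C z)" for z
  have inv: "scE l (scE (inverse l) z) = z" "scE (inverse l) (scE l z) = z" for z
    using l by (simp_all flip: scE_mult)
  have "range (\<lambda>z. z - C1 z) = (\<lambda>z. scE l z - C z) ` range (scE (inverse l))"
    by (simp add: image_image C1_def inv(1))
  also have "range (scE (inverse l)) = UNIV"
    using inv(2) by (rule surjI)
  finally have range_eq: "range (\<lambda>z. scE l z - C z) = range (\<lambda>z. z - C1 z)" by simp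
  have C': "compact_op scE act ip (adjoint ip C)" by (rule compact_op_adjoint[OF C])
  have C1: "bounded_linear C1" "compact_operator C1"
    unfolding C1_def[abs_def]
    by (simp_all add: bounded_linear_compose[OF compact_op_bounded_linear[OF C] bounded_linear_scE]
        compact_operator_compose_right[OF bounded_linear_scE compact_operator_if_compact_op[OF H C]])
  have C1': "bounded_linear C1'" "compact_operator C1'"
    unfolding C1'_def[abs_def]
    by (simp_all add: bounded_linear_compose[OF bounded_linear_scE compact_op_bounded_linear[OF C']]
        compact_operator_compose_left[OF bounded_linear_scE compact_operator_if_compact_op[OF H C']])
  have "adjointable ip C" using C unfolding compact_op_def by blast
  then have adj: "ip (C1 x) y = ip x (C1' y)" for x y
    by (simp add: C1_def C1'_def ip_adjoint ip_scE ip_scE_left)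
  show "closed (range (\<lambda>z. scE l z - C z))"
    unfolding range_eq by (rule closed_image_id_minus_compact[OF C1 subspace_UNIV closed_UNIV])
  show "orth_summand ip (range (\<lambda>z. scE l z - C z))"
    unfolding range_eq by (rule orth_summand_range_id_minus_compact[OF C1 C1' adj])
qed

end

theorem lemma3p2:
  fixes sc :: "complex \<Rightarrow> 'a::{real_normed_algebra,banach} \<Rightarrow> 'a"
    and st :: "'a \<Rightarrow> 'a"
    and scE :: "complex \<Rightarrow> 'e::banach \<Rightarrow> 'e"
    and act :: "'e \<Rightarrow> 'a \<Rightarrow> 'e"
    and ip :: "'e \<Rightarrow> 'e \<Rightarrow> 'a"
    and C :: "'e \<Rightarrow> 'e"
  assumes "cstar_algebra sc st"
    and "hilbert_module sc st scE act ip"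
    and "property_H ip"
    and "compact_op scE act ip C"
  shows "(\<forall>l::complex. l \<noteq> 0 \<longrightarrow>
            closed (range (\<lambda>z. scE l z - C z)) \<and>
            orth_summand ip (range (\<lambda>z. scE l z - C z))) \<and>
         direct_sum {x. x - adjoint ip C x = 0} (range (\<lambda>z. z - C z)) \<and>
         {x. x - adjoint ip C x = 0} = orth ip (range (\<lambda>z. z - C z))"
proof -
  interpret cstar_hilbert_module sc st scE act ip
    using assms(1,2) by unfold_locales
  have summand: "closed (range (\<lambda>z. scE l z - C z)) \<and> orth_summand ip (range (\<lambda>z. scE l z - C z))"
    if "l \<noteq> 0" for l
    using closed_orth_summand_range_scE_minus[OF assms(3,4) that] by blast
  have "adjointable ip C" using assms(4) unfolding compact_op_def by blast
  then have kernel: "orth ip (range (\<lambda>z. z - C z)) = {x. x - adjoint ip C x = 0}"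
    by (intro orth_range_eq_kernel) (simp add: ip.diff_left ip.diff_right ip_adjoint)
  have "orth_summand ip (range (\<lambda>z. z - C z))" using summand[of 1] by simp
  then have "direct_sum {x. x - adjoint ip C x = 0} (range (\<lambda>z. z - C z))"
    unfolding orth_summand_def kernel by (rule direct_sum_sym)
  with summand kernel show ?thesis by simp
qed

end
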